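(* Let $(G,\phi)$ be a test-fee structure with $\phi_d\ge0$ and $\phi_t<\int_{\mu+\phi_d}^{\overline{\theta}}[s-(\mu+\phi_d)]\,dG(s)$. Then: (a) a highest equilibrium threshold exists; (b) a threshold $\tau\ge\underline{s}_G$ is the highest equilibrium threshold if and only if $\tau-\phi_d=E_G[s\mid s\le\tau]$ and $\tau'-\phi_d>E_G[s\mid s\le\tau']$ for all $\tau'>\tau$; (c) there exists an adversarial equilibrium in which the agent discloses score $s$ if and only if $s>\tau$, where $\tau$ is the highest equilibrium threshold.
   Context: The asset value $\theta\sim F$ with support in $[\underline{\theta},\overline{\theta}]$ ($0\le\underline{\theta}<\overline{\theta}<\infty$ the extreme support points) and mean $\mu$. A test-fee structure $(G,\phi)$ consists of the marginal score CDF $G$ of an unbiased test (score $s\in[\underline{\theta},\overline{\theta}]$ with $E[\theta\mid s]=s$) and fees $\phi=(\phi_t,\phi_d)$. In the induced game the agent, not observing $\theta$, decides whether to pay $\phi_t$ to privately observe $s\sim G$, then whether to pay $\phi_d$ to verifiably disclose $s$ to two buyers, who otherwise see a null message; buyers bid in a first-price auction; the agent receives price minus fees. Equilibrium is perfect Bayesian equilibrium; the intermediary's revenue is the expected total fees paid; an adversarial equilibrium is one minimizing this revenue over all equilibria. $\underline{s}_G$ is the lowest score in the support of $G$. A threshold $\tau\ge\underline{s}_G$ is an equilibrium threshold for $(G,\phi)$ if $\tau-\phi_d=E_G[s\mid s\le\tau]$. *)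

theory Defs
  imports "HOL-Probability.Probability"
begin

definition mean_of :: "real measure \<Rightarrow> real" where
  "mean_of M = (\<integral>x. x \<partial>M)"

(* G is the marginal score distribution of an unbiased test of theta ~ F:
   there is a joint law J of (theta, s) with marginals F and G such that
   E[theta | s] = s, i.e. E[theta 1{s \<in> A}] = E[s 1{s \<in> A}] for all Borel A. *)
definition unbiased_test :: "real measure \<Rightarrow> real measure \<Rightarrow> bool" where
  "unbiased_test F G \<longleftrightarrow>
     (\<exists>J :: (real \<times> real) measure.
        prob_space J \<and> sets J = sets borel \<and>
        distr J borel fst = F \<and> distr J borel snd = G \<and>
        (\<forall>A \<in> sets (borel :: real measure).
            (\<integral>x. indicator A (snd x) * fst x \<partial>J) = (\<integral>x. indicator A (snd x) * snd x \<partial>J)))"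

definition low_score :: "real measure \<Rightarrow> real" where
  "low_score G = Inf {x. measure G {..x} > 0}"

(* E_G[s | s \<le> tau]; convention: equals tau when G(tau) = 0
   (which for tau \<ge> low_score G only happens at tau = low_score G) *)
definition cond_mean_below :: "real measure \<Rightarrow> real \<Rightarrow> real" where
  "cond_mean_below G \<tau> =
     (if measure G {..\<tau>} > 0 then (\<integral>s\<in>{..\<tau>}. s \<partial>G) / measure G {..\<tau>} else \<tau>)"

definition eq_threshold :: "real measure \<Rightarrow> real \<Rightarrow> real \<Rightarrow> bool" where
  "eq_threshold G \<phi>d \<tau> \<longleftrightarrow> low_score G \<le> \<tau> \<and> \<tau> - \<phi>d = cond_mean_below G \<tau>"

definition highest_eq_threshold :: "real measure \<Rightarrow> real \<Rightarrow> real \<Rightarrow> bool" where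
  "highest_eq_threshold G \<phi>d \<tau> \<longleftrightarrow>
     eq_threshold G \<phi>d \<tau> \<and> (\<forall>\<tau>'. eq_threshold G \<phi>d \<tau>' \<longrightarrow> \<tau>' \<le> \<tau>)"

(* A (behavioural) strategy profile with beliefs is (q, d, p0):
   q  = probability the agent buys the test,
   d s = probability the agent discloses score s,
   p0 = price after the null message (= buyers' posterior mean of theta, the
        outcome of the first-price auction between two symmetrically informed buyers).
   After disclosure of s the price is E[theta | s] = s. *)
definition test_value ::
  "real measure \<Rightarrow> real \<Rightarrow> real \<Rightarrow> (real \<Rightarrow> real) \<Rightarrow> real \<Rightarrow> real" where
  "test_value G \<phi>t \<phi>d d p0 =
     - \<phi>t + (\<integral>s. d s * (s - \<phi>d) + (1 - d s) * p0 \<partial>G)"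

definition is_equilibrium ::
  "real \<Rightarrow> real \<Rightarrow> real \<Rightarrow> real measure \<Rightarrow> real \<Rightarrow> real \<Rightarrow>
   real \<Rightarrow> (real \<Rightarrow> real) \<Rightarrow> real \<Rightarrow> bool" where
  "is_equilibrium \<theta>lo \<theta>hi \<mu> G \<phi>t \<phi>d q d p0 \<longleftrightarrow>
     0 \<le> q \<and> q \<le> 1 \<and> d \<in> borel_measurable borel \<and> (\<forall>s. 0 \<le> d s \<and> d s \<le> 1) \<and>
     \<theta>lo \<le> p0 \<and> p0 \<le> \<theta>hi \<and>
     \<comment> \<open>sequential rationality of disclosure, at every score\<close>
     (\<forall>s. 0 < d s \<longrightarrow> p0 \<le> s - \<phi>d) \<and> (\<forall>s. d s < 1 \<longrightarrow> s - \<phi>d \<le> p0) \<and>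
     \<comment> \<open>optimality of the testing decision (untested agent receives p0)\<close>
     (0 < q \<longrightarrow> p0 \<le> test_value G \<phi>t \<phi>d d p0) \<and>
     (q < 1 \<longrightarrow> test_value G \<phi>t \<phi>d d p0 \<le> p0) \<and>
     \<comment> \<open>Bayes consistency of the null-message price whenever it is on path\<close>
     (let N = (1 - q) + q * (\<integral>s. 1 - d s \<partial>G)
      in 0 < N \<longrightarrow> p0 * N = (1 - q) * \<mu> + q * (\<integral>s. (1 - d s) * s \<partial>G))"

definition revenue :: "real measure \<Rightarrow> real \<Rightarrow> real \<Rightarrow> real \<Rightarrow> (real \<Rightarrow> real) \<Rightarrow> real" where
  "revenue G \<phi>t \<phi>d q d = q * \<phi>t + q * \<phi>d * (\<integral>s. d s \<partial>G)"

definition adversarial_equilibrium ::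
  "real \<Rightarrow> real \<Rightarrow> real \<Rightarrow> real measure \<Rightarrow> real \<Rightarrow> real \<Rightarrow>
   real \<Rightarrow> (real \<Rightarrow> real) \<Rightarrow> real \<Rightarrow> bool" where
  "adversarial_equilibrium \<theta>lo \<theta>hi \<mu> G \<phi>t \<phi>d q d p0 \<longleftrightarrow>
     is_equilibrium \<theta>lo \<theta>hi \<mu> G \<phi>t \<phi>d q d p0 \<and>
     (\<forall>q' d' p0'. is_equilibrium \<theta>lo \<theta>hi \<mu> G \<phi>t \<phi>d q' d' p0' \<longrightarrow>
        revenue G \<phi>t \<phi>d q d \<le> revenue G \<phi>t \<phi>d q' d')"

end

theory Submission
  imports Defs
begin

(* For a threshold x let L(x) = E_G[(x - s)^+] and K(x) = L(x) - phi_d G(x). Since the integral of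
   s over {s <= x} is x G(x) - L(x), whenever G(x) > 0 the sign of x - phi_d - E_G[s | s <= x] is
   the sign of K(x). K rises with slope at most 1, is nonpositive at the lowest score and positive
   beyond mu + phi_d, so it has a last root tau; this is the highest equilibrium threshold, and
   K > 0 beyond tau gives (b).
   For (c), take any equilibrium with nondisclosure price p. K(p + phi_d) is a lower bound for the
   buyers' expected overpayment on withheld scores. If the agent tested with probability below
   one, staying uninformed would be optimal, which by the fee condition forces p > mu, and then
   Bayes consistency of p fails. With certain testing, Bayes consistency gives K(p + phi_d) <= 0
   whenever some score is withheld, so p + phi_d <= tau and every score above tau is disclosed:
   the threshold-tau equilibrium has the least disclosure, hence the least fee revenue. *)

lemma last_root_of_slope_le_1:
  fixes K :: "real \<Rightarrow> real"
  assumes slope: "\<And>x y. x \<le> y \<Longrightarrow> K y \<le> K x + (y - x)"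
    and start: "K a \<le> 0" and eventually_pos: "\<And>x. b \<le> x \<Longrightarrow> 0 < K x"
  shows "\<exists>\<sigma>\<ge>a. K \<sigma> = 0 \<and> (\<forall>x>\<sigma>. 0 < K x)"
proof -
  define S where "S = {x. a \<le> x \<and> K x \<le> 0}"
  have "a \<in> S" using start by (simp add: S_def)
  have bdd: "bdd_above S"
  proof (rule bdd_aboveI)
    show "x \<le> b" if "x \<in> S" for x
      using that eventually_pos[of x] by (smt (verit) S_def mem_Collect_eq)
  qed
  define \<sigma> where "\<sigma> = Sup S"
  have upper: "x \<le> \<sigma>" if "x \<in> S" for x
    unfolding \<sigma>_def using that bdd by (rule cSup_upper)
  have "a \<le> \<sigma>" using \<open>a \<in> S\<close> by (rule upper)
  have pos: "0 < K x" if "\<sigma> < x" for x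
    using upper[of x] that \<open>a \<le> \<sigma>\<close> by (force simp: S_def)
  have "K \<sigma> \<le> 0"
  proof (rule ccontr)
    assume "\<not> K \<sigma> \<le> 0"
    then have "\<sigma> - K \<sigma> < Sup S" by (simp add: \<sigma>_def)
    then obtain x where "x \<in> S" "\<sigma> - K \<sigma> < x"
      using less_cSup_iff[OF _ bdd] \<open>a \<in> S\<close> by blast
    with slope[of x \<sigma>] upper show False by (force simp: S_def)
  qed
  moreover have "0 \<le> K \<sigma>"
  proof (rule ccontr)
    assume "\<not> 0 \<le> K \<sigma>"
    then show False using slope[of \<sigma> "\<sigma> - K \<sigma>"] pos[of "\<sigma> - K \<sigma>"] by simp
  qed
  ultimately show ?thesis using \<open>a \<le> \<sigma>\<close> pos by (intro exI[of _ \<sigma>]) auto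
qed

lemma highest_eq_threshold_unique:
  "highest_eq_threshold G \<phi>d \<tau> \<Longrightarrow> highest_eq_threshold G \<phi>d \<tau>' \<Longrightarrow> \<tau> = \<tau>'"
  unfolding highest_eq_threshold_def by (meson order_antisym)

lemma highest_eq_thresholdI:
  assumes "eq_threshold G \<phi>d \<tau>" and "\<forall>\<tau>'>\<tau>. cond_mean_below G \<tau>' < \<tau>' - \<phi>d"
  shows "highest_eq_threshold G \<phi>d \<tau>"
  using assms unfolding highest_eq_threshold_def eq_threshold_def by (metis linorder_not_le less_irrefl)

definition rational_disclosure :: "real \<Rightarrow> (real \<Rightarrow> real) \<Rightarrow> real \<Rightarrow> bool" where
  "rational_disclosure \<phi>d d p \<longleftrightarrow> d \<in> borel_measurable borel \<and> (\<forall>s. 0 \<le> d s \<and> d s \<le> 1) \<and>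
     (\<forall>s. 0 < d s \<longrightarrow> p \<le> s - \<phi>d) \<and> (\<forall>s. d s < 1 \<longrightarrow> s - \<phi>d \<le> p)"

lemma rational_disclosure_threshold:
  "rational_disclosure \<phi>d (\<lambda>s. if \<tau> < s then 1 else 0) (\<tau> - \<phi>d)"
  unfolding rational_disclosure_def by auto

lemma rational_disclosure_eq_1: "rational_disclosure \<phi>d d p \<Longrightarrow> p + \<phi>d < s \<Longrightarrow> d s = 1"
  unfolding rational_disclosure_def by (smt (verit))

lemma rational_disclosure_eq_0: "rational_disclosure \<phi>d d p \<Longrightarrow> s < p + \<phi>d \<Longrightarrow> d s = 0"
  unfolding rational_disclosure_def by (smt (verit))

lemma is_equilibrium_rational_disclosure:
  "is_equilibrium a b \<mu> G \<phi>t \<phi>d q d p \<Longrightarrow> rational_disclosure \<phi>d d p"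
  unfolding is_equilibrium_def rational_disclosure_def by simp

lemma is_equilibrium_full_testing_iff:
  "is_equilibrium a b \<mu> G \<phi>t \<phi>d 1 d p \<longleftrightarrow>
     a \<le> p \<and> p \<le> b \<and> rational_disclosure \<phi>d d p \<and> p \<le> test_value G \<phi>t \<phi>d d p \<and>
     (0 < (\<integral>s. 1 - d s \<partial>G) \<longrightarrow> p * (\<integral>s. 1 - d s \<partial>G) = (\<integral>s. (1 - d s) * s \<partial>G))"
  unfolding is_equilibrium_def rational_disclosure_def Let_def by auto

lemma unbiased_test_mean_eq:
  assumes "unbiased_test F G"
  shows "mean_of F = mean_of G"
proof -
  obtain J :: "(real \<times> real) measure" where J: "sets J = sets borel"
    "distr J borel fst = F" "distr J borel snd = G"
    "\<forall>A \<in> sets (borel :: real measure).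
       (\<integral>x. indicator A (snd x) * fst x \<partial>J) = (\<integral>x. indicator A (snd x) * snd x \<partial>J)"
    using assms unfolding unbiased_test_def by blast
  have fst: "fst \<in> measurable J borel" and snd: "snd \<in> measurable J borel"
    by (simp_all add: measurable_cong_sets[OF J(1) refl] borel_measurable_continuous_onI
        continuous_on_fst continuous_on_snd continuous_on_id)
  have "mean_of F = (\<integral>x. fst x \<partial>J)"
    using integral_distr[OF fst, of "\<lambda>x. x"] J(2) by (simp add: mean_of_def)
  also have "\<dots> = (\<integral>x. snd x \<partial>J)" using J(4)[rule_format, of UNIV] by simp
  also have "\<dots> = mean_of G"
    using integral_distr[OF snd, of "\<lambda>x. x"] J(3) by (simp add: mean_of_def)
  finally show ?thesis .
qed

locale bounded_real_distribution = real_distribution G for G :: "real measure" +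
  fixes lo hi :: real
  assumes support: "AE s in G. lo \<le> s \<and> s \<le> hi"
begin

lemma measure_UNIV [simp]: "measure G UNIV = 1"
  using prob_space by simp

lemma integrable_bounded:
  fixes f :: "real \<Rightarrow> real"
  assumes "f \<in> borel_measurable borel" and "\<And>s. lo \<le> s \<Longrightarrow> s \<le> hi \<Longrightarrow> \<bar>f s\<bar> \<le> B"
  shows "integrable G f"
  using support assms by (intro integrable_const_bound[where B=B]) (auto elim: eventually_mono)

lemma integrable_id: "integrable G (\<lambda>s. s)"
  by (rule integrable_bounded[where B="\<bar>lo\<bar> + \<bar>hi\<bar>"]) auto

lemma integrable_indicator_atMost: "integrable G (indicator {..x} :: real \<Rightarrow> real)"
  by (rule integrable_bounded[where B=1]) (auto simp: indicator_def)

lemma cdf_eq_integral: "cdf G x = (\<integral>s. indicator {..x} s \<partial>G)"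
  by (simp add: cdf_def)

lemma cdf_eq_0: "x < lo \<Longrightarrow> cdf G x = 0"
  unfolding cdf_def using support by (subst prob_eq_0) (auto elim: eventually_mono)

lemma low_score_eq_Inf: "low_score G = Inf {x. 0 < cdf G x}"
  by (simp add: low_score_def cdf_def)

lemma cdf_pos_hi: "hi \<in> {x. 0 < cdf G x}"
proof -
  have "cdf G hi = 1"
    unfolding cdf_def using support by (subst prob_eq_1) (auto elim: eventually_mono)
  then show ?thesis by simp
qed

lemma bdd_below_cdf_pos: "bdd_below {x. 0 < cdf G x}"
  using cdf_eq_0 by (force intro: bdd_belowI[of _ lo] leI)

lemma low_score_bounds: "lo \<le> low_score G" "low_score G \<le> hi"
  unfolding low_score_eq_Inf using cdf_pos_hi bdd_below_cdf_pos cdf_eq_0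
  by (force intro: cInf_greatest leI, auto intro: cInf_lower)

lemma cdf_pos_above_low_score:
  assumes "low_score G < x" shows "0 < cdf G x"
proof -
  obtain y where "0 < cdf G y" "y < x"
    using cInf_lessD[of "{x. 0 < cdf G x}" x] cdf_pos_hi assms by (auto simp: low_score_eq_Inf)
  then show ?thesis using cdf_nondecreasing[of y x] by simp
qed

lemma cdf_eq_0_below_low_score: "x < low_score G \<Longrightarrow> cdf G x = 0"
  using cInf_lower[of x "{x. 0 < cdf G x}"] bdd_below_cdf_pos cdf_nonneg[of x]
  by (force simp: low_score_eq_Inf)

lemma AE_low_score_le: "AE s in G. low_score G \<le> s"
proof -
  have "\<forall>\<^sub>F x in at_left (low_score G). cdf G x = 0"
    using eventually_at_left_real[of "low_score G - 1" "low_score G"]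
    by (auto elim!: eventually_mono simp: cdf_eq_0_below_low_score)
  then have "measure G {..<low_score G} = 0"
    by (intro tendsto_unique[OF trivial_limit_at_left_real cdf_at_left] tendsto_eventually)
  then show ?thesis by (subst (asm) prob_eq_0) (auto simp: not_less)
qed

definition deficit_below :: "real \<Rightarrow> real" where
  "deficit_below x = (\<integral>s. max 0 (x - s) \<partial>G)"

definition excess_above :: "real \<Rightarrow> real" where
  "excess_above t = (\<integral>s. max 0 (s - t) \<partial>G)"

definition threshold_gap :: "real \<Rightarrow> real \<Rightarrow> real" where
  "threshold_gap \<phi>d x = deficit_below x - \<phi>d * cdf G x"

lemma integrable_deficit: "integrable G (\<lambda>s. max 0 (x - s))"
  by (rule integrable_bounded[where B="\<bar>x\<bar> + \<bar>lo\<bar> + \<bar>hi\<bar>"]) auto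

lemma integrable_excess: "integrable G (\<lambda>s. max 0 (s - t))"
  by (rule integrable_bounded[where B="\<bar>t\<bar> + \<bar>lo\<bar> + \<bar>hi\<bar>"]) auto

lemma excess_above_antimono: "t \<le> t' \<Longrightarrow> excess_above t' \<le> excess_above t"
  unfolding excess_above_def by (intro integral_mono integrable_excess) auto

lemma excess_above_eq_set_integral: "excess_above t = (\<integral>s\<in>{t..hi}. s - t \<partial>G)"
proof -
  have "AE s in G. max 0 (s - t) = indicator {t..hi} s *\<^sub>R (s - t)"
    using support by eventually_elim (auto simp: indicator_def)
  then show ?thesis
    unfolding excess_above_def set_lebesgue_integral_def by (intro integral_cong_AE) auto
qed

lemma deficit_below_slope:
  assumes "x \<le> y" shows "deficit_below y \<le> deficit_below x + (y - x)"
proof -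
  have "deficit_below y \<le> (\<integral>s. max 0 (x - s) + (y - x) \<partial>G)"
    unfolding deficit_below_def using assms
    by (intro integral_mono integrable_deficit Bochner_Integration.integrable_add) auto
  also have "\<dots> = deficit_below x + (y - x)"
    by (simp add: deficit_below_def integrable_deficit)
  finally show ?thesis .
qed

lemma deficit_below_le_cdf:
  assumes "low_score G \<le> x" shows "deficit_below x \<le> (x - low_score G) * cdf G x"
proof -
  have "deficit_below x \<le> (\<integral>s. (x - low_score G) * indicator {..x} s \<partial>G)"
    unfolding deficit_below_def
  proof (intro integral_mono_AE integrable_deficit integrable_mult_right integrable_indicator_atMost)
    show "AE s in G. max 0 (x - s) \<le> (x - low_score G) * indicator {..x} s"
      using AE_low_score_le by eventually_elim (auto simp: indicator_def)
  qed
  then show ?thesis by (simp add: cdf_eq_integral)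
qed

lemma deficit_below_ge_mean: "x - mean_of G \<le> deficit_below x"
proof -
  have "x - mean_of G = (\<integral>s. x - s \<partial>G)"
    by (simp add: mean_of_def integrable_id)
  also have "\<dots> \<le> deficit_below x"
    unfolding deficit_below_def
    by (intro integral_mono integrable_deficit Bochner_Integration.integrable_diff integrable_id) auto
  finally show ?thesis .
qed

lemma set_integral_atMost: "(\<integral>s\<in>{..x}. s \<partial>G) = x * cdf G x - deficit_below x"
proof -
  have "(\<integral>s\<in>{..x}. s \<partial>G) = (\<integral>s. x * indicator {..x} s - max 0 (x - s) \<partial>G)"
    unfolding set_lebesgue_integral_def
    by (intro Bochner_Integration.integral_cong) (auto simp: indicator_def)
  then show ?thesis
    by (simp add: cdf_eq_integral deficit_below_def integrable_deficit integrable_indicator_atMost)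
qed

lemma cond_mean_below_eq: "0 < cdf G x \<Longrightarrow> cond_mean_below G x = x - deficit_below x / cdf G x"
  unfolding cond_mean_below_def set_integral_atMost by (simp add: cdf_def2[symmetric] field_simps)

lemma cond_mean_below_threshold_gap:
  assumes "0 < cdf G x"
  shows "x - \<phi>d = cond_mean_below G x \<longleftrightarrow> threshold_gap \<phi>d x = 0"
    and "cond_mean_below G x < x - \<phi>d \<longleftrightarrow> 0 < threshold_gap \<phi>d x"
proof -
  have "threshold_gap \<phi>d x = (x - \<phi>d - cond_mean_below G x) * cdf G x"
    using assms by (simp add: cond_mean_below_eq threshold_gap_def field_simps)
  then show "x - \<phi>d = cond_mean_below G x \<longleftrightarrow> threshold_gap \<phi>d x = 0"
    and "cond_mean_below G x < x - \<phi>d \<longleftrightarrow> 0 < threshold_gap \<phi>d x"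
    using assms by (auto simp: zero_less_mult_iff)
qed

lemma threshold_gap_slope:
  "0 \<le> \<phi>d \<Longrightarrow> x \<le> y \<Longrightarrow> threshold_gap \<phi>d y \<le> threshold_gap \<phi>d x + (y - x)"
  using deficit_below_slope[of x y] cdf_nondecreasing[of x y] mult_left_mono[of "cdf G x" "cdf G y" \<phi>d]
  by (simp add: threshold_gap_def)

lemma threshold_gap_ge_mean: "0 \<le> \<phi>d \<Longrightarrow> x - \<phi>d - mean_of G \<le> threshold_gap \<phi>d x"
  using deficit_below_ge_mean[of x] mult_left_le[OF cdf_bounded_prob[of x], of \<phi>d]
  by (simp add: threshold_gap_def)

lemma threshold_gap_le_cdf:
  "low_score G \<le> x \<Longrightarrow> threshold_gap \<phi>d x \<le> (x - low_score G - \<phi>d) * cdf G x"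
  using deficit_below_le_cdf[of x] by (simp add: threshold_gap_def algebra_simps)

lemma eq_threshold_last_root:
  assumes "0 \<le> \<phi>d"
  shows "\<exists>\<tau>. eq_threshold G \<phi>d \<tau> \<and> threshold_gap \<phi>d \<tau> = 0 \<and> (\<forall>x>\<tau>. 0 < threshold_gap \<phi>d x)"
proof -
  have "threshold_gap \<phi>d (low_score G) \<le> 0"
    using threshold_gap_le_cdf[of "low_score G" \<phi>d, OF order_refl]
      mult_nonneg_nonneg[OF assms cdf_nonneg[of "low_score G"]] by simp
  moreover have "0 < threshold_gap \<phi>d x" if "mean_of G + \<phi>d + 1 \<le> x" for x
    using threshold_gap_ge_mean[OF assms, of x] that by simp
  ultimately obtain \<tau> where \<tau>: "low_score G \<le> \<tau>" "threshold_gap \<phi>d \<tau> = 0"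
    "\<forall>x>\<tau>. 0 < threshold_gap \<phi>d x"
    using last_root_of_slope_le_1[of "threshold_gap \<phi>d"] threshold_gap_slope[OF assms] by blast
  have "\<tau> - \<phi>d = cond_mean_below G \<tau>"
  proof (cases "0 < cdf G \<tau>")
    case True
    then show ?thesis using cond_mean_below_threshold_gap(1) \<tau>(2) by simp
  next
    case False
    then have "\<tau> = low_score G" using cdf_pos_above_low_score \<tau>(1) by force
    (* cond_mean_below G tau = tau by convention here, so tau is a threshold only if phi_d = 0 *)
    have "\<phi>d = 0"
    proof (rule ccontr)
      assume "\<phi>d \<noteq> 0"
      then have "0 < threshold_gap \<phi>d (\<tau> + \<phi>d / 2)" using \<tau>(3) assms by simp
      moreover have "threshold_gap \<phi>d (\<tau> + \<phi>d / 2) \<le> - \<phi>d / 2 * cdf G (\<tau> + \<phi>d / 2)"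
        using threshold_gap_le_cdf[of "\<tau> + \<phi>d / 2" \<phi>d] \<open>\<tau> = low_score G\<close> assms by simp
      ultimately show False
        using mult_nonneg_nonneg[OF assms cdf_nonneg[of "\<tau> + \<phi>d / 2"]] by simp
    qed
    then show ?thesis using False by (simp add: cond_mean_below_def cdf_def2)
  qed
  then show ?thesis using \<tau> by (auto simp: eq_threshold_def)
qed

lemma highest_eq_threshold_exists:
  assumes "0 \<le> \<phi>d"
  shows "\<exists>\<tau>. highest_eq_threshold G \<phi>d \<tau> \<and> threshold_gap \<phi>d \<tau> = 0 \<and>
    (\<forall>x>\<tau>. 0 < threshold_gap \<phi>d x)"
proof -
  obtain \<tau> where \<tau>: "eq_threshold G \<phi>d \<tau>" "threshold_gap \<phi>d \<tau> = 0"
    "\<forall>x>\<tau>. 0 < threshold_gap \<phi>d x"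
    using eq_threshold_last_root[OF assms] by blast
  have "cond_mean_below G x < x - \<phi>d" if "\<tau> < x" for x
  proof -
    have "0 < cdf G x"
      using \<tau>(1) that by (intro cdf_pos_above_low_score) (simp add: eq_threshold_def)
    then show ?thesis using cond_mean_below_threshold_gap(2) \<tau>(3) that by blast
  qed
  then show ?thesis using \<tau> by (blast intro: highest_eq_thresholdI)
qed

lemma highest_eq_threshold_gap:
  assumes "0 \<le> \<phi>d" and "highest_eq_threshold G \<phi>d \<tau>"
  shows "threshold_gap \<phi>d \<tau> = 0" and "\<forall>x>\<tau>. 0 < threshold_gap \<phi>d x"
  using highest_eq_threshold_exists[OF assms(1)] highest_eq_threshold_unique[OF assms(2)] by auto

lemma highest_eq_threshold_iff:
  assumes "0 \<le> \<phi>d"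
  shows "highest_eq_threshold G \<phi>d \<tau> \<longleftrightarrow>
    eq_threshold G \<phi>d \<tau> \<and> (\<forall>\<tau>'>\<tau>. cond_mean_below G \<tau>' < \<tau>' - \<phi>d)"
proof
  assume highest: "highest_eq_threshold G \<phi>d \<tau>"
  then have "low_score G \<le> \<tau>" by (simp add: highest_eq_threshold_def eq_threshold_def)
  then have "0 < cdf G \<tau>'" if "\<tau> < \<tau>'" for \<tau>'
    using that by (intro cdf_pos_above_low_score) simp
  then show "eq_threshold G \<phi>d \<tau> \<and> (\<forall>\<tau>'>\<tau>. cond_mean_below G \<tau>' < \<tau>' - \<phi>d)"
    using highest highest_eq_threshold_gap(2)[OF assms highest] cond_mean_below_threshold_gap(2)
    by (auto simp: highest_eq_threshold_def)
qed (blast intro: highest_eq_thresholdI)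

lemma cond_mean_below_bounds:
  assumes "low_score G \<le> x"
  shows "lo \<le> cond_mean_below G x \<and> cond_mean_below G x \<le> hi"
proof (cases "0 < cdf G x")
  case True
  let ?I = "\<integral>s. indicator {..x} s * s \<partial>G"
  have integrable: "integrable G (\<lambda>s. indicator {..x} s * s)"
    by (rule integrable_bounded[where B="\<bar>lo\<bar> + \<bar>hi\<bar>"]) (auto simp: indicator_def)
  have "AE s in G. lo * indicator {..x} s \<le> indicator {..x} s * s"
    "AE s in G. indicator {..x} s * s \<le> hi * indicator {..x} s"
    by (rule eventually_mono[OF support]; auto simp: indicator_def)+
  then have "(\<integral>s. lo * indicator {..x} s \<partial>G) \<le> ?I" "?I \<le> (\<integral>s. hi * indicator {..x} s \<partial>G)"
    by (intro integral_mono_AE integrable integrable_mult_right integrable_indicator_atMost; simp)+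
  moreover have "cond_mean_below G x = ?I / cdf G x"
    using True by (simp add: cond_mean_below_def set_lebesgue_integral_def cdf_def2 mult.commute)
  ultimately show ?thesis
    using True by (simp add: cdf_eq_integral le_divide_eq divide_le_eq)
next
  case False
  then have "x = low_score G" using cdf_pos_above_low_score assms by force
  then show ?thesis using False low_score_bounds by (simp add: cond_mean_below_def cdf_def2)
qed

lemma integrable_rational_disclosure:
  assumes "rational_disclosure \<phi>d d p"
  shows "integrable G d" and "integrable G (\<lambda>s. (1 - d s) * s)"
proof -
  have d: "d \<in> borel_measurable borel" "\<And>s. 0 \<le> d s \<and> d s \<le> 1"
    using assms by (auto simp: rational_disclosure_def)
  show "integrable G d"
    using d by (intro integrable_bounded[where B=1]) auto
  have "\<bar>(1 - d s) * s\<bar> \<le> \<bar>lo\<bar> + \<bar>hi\<bar>" if "lo \<le> s" "s \<le> hi" for s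
    using d(2)[of s] that mult_left_le_one_le[of "\<bar>s\<bar>" "1 - d s"] by (simp add: abs_mult)
  then show "integrable G (\<lambda>s. (1 - d s) * s)"
    using d(1) by (intro integrable_bounded) auto
qed

lemma test_value_rational_disclosure:
  assumes "rational_disclosure \<phi>d d p"
  shows "test_value G \<phi>t \<phi>d d p = p - \<phi>t + excess_above (p + \<phi>d)"
proof -
  have "d s * (s - \<phi>d) + (1 - d s) * p = p + max 0 (s - (p + \<phi>d))" for s
    using rational_disclosure_eq_1[OF assms, of s] rational_disclosure_eq_0[OF assms, of s]
    by (cases "p + \<phi>d < s"; cases "s < p + \<phi>d") (auto simp: algebra_simps)
  then show ?thesis
    by (simp add: test_value_def excess_above_def integrable_excess)
qed

lemma threshold_gap_le_nondisclosure:
  assumes "0 \<le> \<phi>d" and "rational_disclosure \<phi>d d p"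
  shows "threshold_gap \<phi>d (p + \<phi>d) \<le> p * (\<integral>s. 1 - d s \<partial>G) - (\<integral>s. (1 - d s) * s \<partial>G)"
proof -
  note integrable = integrable_rational_disclosure[OF assms(2)]
  have "max 0 (p + \<phi>d - s) - \<phi>d * indicator {..p + \<phi>d} s \<le> p * (1 - d s) - (1 - d s) * s" for s
  proof (cases "s = p + \<phi>d")
    case True
    then show ?thesis using assms by (auto simp: rational_disclosure_def algebra_simps)
  next
    case False
    then show ?thesis
      using rational_disclosure_eq_1[OF assms(2), of s] rational_disclosure_eq_0[OF assms(2), of s]
      by (cases "p + \<phi>d < s") (auto simp: indicator_def)
  qed
  then have "(\<integral>s. max 0 (p + \<phi>d - s) - \<phi>d * indicator {..p + \<phi>d} s \<partial>G)
      \<le> (\<integral>s. p * (1 - d s) - (1 - d s) * s \<partial>G)"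
    using integrable
    by (intro integral_mono Bochner_Integration.integrable_diff integrable_mult_right
        integrable_deficit integrable_indicator_atMost integrable_const) auto
  then show ?thesis
    using integrable
    by (simp add: threshold_gap_def deficit_below_def cdf_eq_integral integrable_deficit
        integrable_indicator_atMost)
qed

lemma equilibrium_tests_surely:
  assumes "0 \<le> \<phi>d" and fee: "\<phi>t < excess_above (mean_of G + \<phi>d)"
    and eq: "is_equilibrium a b (mean_of G) G \<phi>t \<phi>d q d p"
  shows "q = 1"
proof (rule ccontr)
  assume "q \<noteq> 1"
  define A where "A = (\<integral>s. 1 - d s \<partial>G)"
  define B where "B = (\<integral>s. (1 - d s) * s \<partial>G)"
  have rational: "rational_disclosure \<phi>d d p"
    using eq by (rule is_equilibrium_rational_disclosure)
  have q: "0 \<le> q" "q < 1" and untested: "test_value G \<phi>t \<phi>d d p \<le> p"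
    and bayes: "0 < (1 - q) + q * A \<Longrightarrow> p * ((1 - q) + q * A) = (1 - q) * mean_of G + q * B"
    using eq \<open>q \<noteq> 1\<close> by (auto simp: is_equilibrium_def A_def B_def Let_def)
  have "excess_above (p + \<phi>d) < excess_above (mean_of G + \<phi>d)"
    using untested fee test_value_rational_disclosure[OF rational] by simp
  then have "mean_of G < p"
    using excess_above_antimono[of "p + \<phi>d" "mean_of G + \<phi>d"] by force
  then have "0 < p * A - B"
    using threshold_gap_ge_mean[OF assms(1), of "p + \<phi>d"]
      threshold_gap_le_nondisclosure[OF assms(1) rational] by (simp add: A_def B_def)
  moreover have "0 \<le> A"
    using rational by (auto simp: A_def rational_disclosure_def)
  then have "p * ((1 - q) + q * A) = (1 - q) * mean_of G + q * B"
    using q by (intro bayes) (simp add: add_pos_nonneg)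
  moreover have "p * ((1 - q) + q * A) - ((1 - q) * mean_of G + q * B)
      = (1 - q) * (p - mean_of G) + q * (p * A - B)"
    by (simp add: algebra_simps)
  ultimately show False
    using q \<open>mean_of G < p\<close> mult_pos_pos[of "1 - q" "p - mean_of G"]
      mult_nonneg_nonneg[of q "p * A - B"] by linarith
qed

lemma equilibrium_nondisclosure_le_cdf:
  assumes "0 \<le> \<phi>d" and last_root: "\<forall>x>\<tau>. 0 < threshold_gap \<phi>d x"
    and eq: "is_equilibrium a b \<mu> G \<phi>t \<phi>d 1 d p"
  shows "(\<integral>s. 1 - d s \<partial>G) \<le> cdf G \<tau>"
proof (cases "0 < (\<integral>s. 1 - d s \<partial>G)")
  case True
  have rational: "rational_disclosure \<phi>d d p"
    using eq by (rule is_equilibrium_rational_disclosure)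
  have "p * (\<integral>s. 1 - d s \<partial>G) = (\<integral>s. (1 - d s) * s \<partial>G)"
    using eq True by (simp add: is_equilibrium_full_testing_iff)
  then have "threshold_gap \<phi>d (p + \<phi>d) \<le> 0"
    using threshold_gap_le_nondisclosure[OF assms(1) rational] by simp
  then have "p + \<phi>d \<le> \<tau>"
    using last_root by (meson not_le)
  then have "1 - d s \<le> indicator {..\<tau>} s" for s
    using rational_disclosure_eq_1[OF rational, of s] rational
    by (cases "s \<le> \<tau>") (auto simp: indicator_def rational_disclosure_def)
  then show ?thesis
    unfolding cdf_eq_integral using integrable_rational_disclosure(1)[OF rational]
    by (intro integral_mono integrable_indicator_atMost Bochner_Integration.integrable_diff) auto
qed (use cdf_nonneg[of \<tau>] in simp)

lemma nondisclosure_threshold: "(\<integral>s. 1 - (if \<tau> < s then 1 else 0) \<partial>G) = cdf G \<tau>"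
  unfolding cdf_eq_integral by (intro Bochner_Integration.integral_cong) (auto simp: indicator_def)

lemma threshold_equilibrium:
  assumes "0 \<le> \<phi>d" and fee: "\<phi>t < excess_above (mean_of G + \<phi>d)"
    and threshold: "eq_threshold G \<phi>d \<tau>" and root: "threshold_gap \<phi>d \<tau> = 0"
  shows "is_equilibrium lo hi \<mu> G \<phi>t \<phi>d 1 (\<lambda>s. if \<tau> < s then 1 else 0) (\<tau> - \<phi>d)"
proof -
  let ?d = "\<lambda>s. if \<tau> < s then 1 else 0 :: real"
  have pooled: "(\<integral>s. (1 - ?d s) * s \<partial>G) = (\<integral>s\<in>{..\<tau>}. s \<partial>G)"
    unfolding set_lebesgue_integral_def
    by (intro Bochner_Integration.integral_cong) (auto simp: indicator_def)
  have "\<tau> \<le> mean_of G + \<phi>d"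
    using threshold_gap_ge_mean[OF assms(1), of \<tau>] root by simp
  then have "\<phi>t < excess_above \<tau>"
    using fee excess_above_antimono by fastforce
  then have "\<tau> - \<phi>d \<le> test_value G \<phi>t \<phi>d ?d (\<tau> - \<phi>d)"
    by (simp add: test_value_rational_disclosure[OF rational_disclosure_threshold])
  moreover have "lo \<le> \<tau> - \<phi>d" "\<tau> - \<phi>d \<le> hi"
    using threshold cond_mean_below_bounds[of \<tau>] by (auto simp: eq_threshold_def)
  moreover have "(\<tau> - \<phi>d) * cdf G \<tau> = (\<integral>s\<in>{..\<tau>}. s \<partial>G)" if "0 < cdf G \<tau>"
    using threshold that by (simp add: eq_threshold_def cond_mean_below_def cdf_def2)
  ultimately show ?thesis
    by (simp add: is_equilibrium_full_testing_iff rational_disclosure_threshold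
        nondisclosure_threshold pooled)
qed

lemma adversarial_threshold_equilibrium:
  assumes "0 \<le> \<phi>d" and fee: "\<phi>t < excess_above (mean_of G + \<phi>d)"
    and highest: "highest_eq_threshold G \<phi>d \<tau>"
  shows "adversarial_equilibrium lo hi (mean_of G) G \<phi>t \<phi>d 1
    (\<lambda>s. if \<tau> < s then 1 else 0) (\<tau> - \<phi>d)"
  unfolding adversarial_equilibrium_def
proof (intro conjI allI impI)
  let ?d = "\<lambda>s. if \<tau> < s then 1 else 0 :: real"
  have "eq_threshold G \<phi>d \<tau>"
    using highest by (simp add: highest_eq_threshold_def)
  then show "is_equilibrium lo hi (mean_of G) G \<phi>t \<phi>d 1 ?d (\<tau> - \<phi>d)"
    using threshold_equilibrium[OF assms(1) fee] highest_eq_threshold_gap(1)[OF assms(1) highest]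
    by blast
  fix q d p
  assume eq: "is_equilibrium lo hi (mean_of G) G \<phi>t \<phi>d q d p"
  then have "q = 1" by (rule equilibrium_tests_surely[OF assms(1) fee])
  have disclosed: "(\<integral>s. d' s \<partial>G) = 1 - (\<integral>s. 1 - d' s \<partial>G)" if "integrable G d'" for d' :: "real \<Rightarrow> real"
    using that by (simp add:)
  have "revenue G \<phi>t \<phi>d 1 ?d = \<phi>t + \<phi>d * (1 - cdf G \<tau>)"
    using disclosed[OF integrable_rational_disclosure(1)[OF rational_disclosure_threshold]]
    by (simp add: revenue_def nondisclosure_threshold)
  also have "\<dots> \<le> \<phi>t + \<phi>d * (1 - (\<integral>s. 1 - d s \<partial>G))"
    using equilibrium_nondisclosure_le_cdf[OF assms(1) highest_eq_threshold_gap(2)[OF assms(1) highest]]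
      eq \<open>q = 1\<close> assms(1)
    by (simp add: mult_left_mono)
  also have "\<dots> = revenue G \<phi>t \<phi>d q d"
    using disclosed[OF integrable_rational_disclosure(1)[OF is_equilibrium_rational_disclosure[OF eq]]]
      \<open>q = 1\<close> by (simp add: revenue_def)
  finally show "revenue G \<phi>t \<phi>d 1 ?d \<le> revenue G \<phi>t \<phi>d q d" .
qed

end

theorem lemma3:
  fixes F G :: "real measure" and \<theta>lo \<theta>hi \<phi>t \<phi>d :: real
  assumes F_prob: "prob_space F" and F_sets: "sets F = sets borel"
    and F_supp: "AE \<theta> in F. \<theta>lo \<le> \<theta> \<and> \<theta> \<le> \<theta>hi"
    and F_lo_extreme: "\<forall>e>0. 0 < measure F {..<\<theta>lo + e}"
    and F_hi_extreme: "\<forall>e>0. 0 < measure F {\<theta>hi - e<..}"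
    and bounds: "0 \<le> \<theta>lo" "\<theta>lo < \<theta>hi"
    and G_prob: "prob_space G" and G_sets: "sets G = sets borel"
    and G_supp: "AE s in G. \<theta>lo \<le> s \<and> s \<le> \<theta>hi"
    and unbiased: "unbiased_test F G"
    and fee_d: "0 \<le> \<phi>d"
    and fee_t: "\<phi>t < (\<integral>s\<in>{mean_of F + \<phi>d..\<theta>hi}. s - (mean_of F + \<phi>d) \<partial>G)"
  shows "(\<exists>\<tau>. highest_eq_threshold G \<phi>d \<tau>)
    \<and> (\<forall>\<tau>. low_score G \<le> \<tau> \<longrightarrow>
          (highest_eq_threshold G \<phi>d \<tau> \<longleftrightarrow>
             \<tau> - \<phi>d = cond_mean_below G \<tau> \<and>
             (\<forall>\<tau>'>\<tau>. \<tau>' - \<phi>d > cond_mean_below G \<tau>')))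
    \<and> (\<forall>\<tau>. highest_eq_threshold G \<phi>d \<tau> \<longrightarrow>
          (\<exists>q p0. 0 < q \<and>
             adversarial_equilibrium \<theta>lo \<theta>hi (mean_of F) G \<phi>t \<phi>d q
               (\<lambda>s. if \<tau> < s then 1 else 0) p0))"
proof -
  interpret bounded_real_distribution G \<theta>lo \<theta>hi
    by (intro bounded_real_distribution.intro real_distribution.intro real_distribution_axioms.intro
        bounded_real_distribution_axioms.intro G_prob G_sets G_supp)
  have mean: "mean_of F = mean_of G"
    using unbiased by (rule unbiased_test_mean_eq)
  have fee: "\<phi>t < excess_above (mean_of G + \<phi>d)"
    using fee_t by (simp add: mean excess_above_eq_set_integral)
  have "\<exists>\<tau>. highest_eq_threshold G \<phi>d \<tau>"
    using highest_eq_threshold_exists[OF fee_d] by blast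
  moreover have "highest_eq_threshold G \<phi>d \<tau> \<longleftrightarrow>
      \<tau> - \<phi>d = cond_mean_below G \<tau> \<and> (\<forall>\<tau>'>\<tau>. \<tau>' - \<phi>d > cond_mean_below G \<tau>')"
    if "low_score G \<le> \<tau>" for \<tau>
    using highest_eq_threshold_iff[OF fee_d] that by (simp add: eq_threshold_def)
  moreover have "\<exists>q p0. 0 < q \<and> adversarial_equilibrium \<theta>lo \<theta>hi (mean_of F) G \<phi>t \<phi>d q
      (\<lambda>s. if \<tau> < s then 1 else 0) p0"
    if "highest_eq_threshold G \<phi>d \<tau>" for \<tau>
    using adversarial_threshold_equilibrium[OF fee_d fee that] zero_less_one
    unfolding mean by blast
  ultimately show ?thesis by blast
qed

end
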